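(* Let $0<\omega_-<\omega_+$ and set $\boldsymbol\omega=(\omega_-,\omega_+)$. (i) If $\omega_+\neq 3\omega_-$, then for every $(\boldsymbol\alpha,\boldsymbol\beta)\in\mathbb N^2\times\mathbb N^2$ with $|\boldsymbol\alpha+\boldsymbol\beta|=4$ and $\boldsymbol\alpha\neq\boldsymbol\beta$, $$|\boldsymbol\omega\cdot(\boldsymbol\alpha-\boldsymbol\beta)|\geq \gamma:=\min\{\omega_-,\ \omega_+-\omega_-,\ |3\omega_--\omega_+|\}>0.$$ (ii) If $\omega_+=3\omega_-$, then for every $(\boldsymbol\alpha,\boldsymbol\beta)\in\mathbb N^2\times\mathbb N^2$ with $|\boldsymbol\alpha+\boldsymbol\beta|=4$, $\boldsymbol\alpha\neq\boldsymbol\beta$ and $(\boldsymbol\alpha,\boldsymbol\beta)\notin\{((3,0),(0,1)),\ ((0,1),(3,0))\}$, $$|\boldsymbol\omega\cdot(\boldsymbol\alpha-\boldsymbol\beta)|\geq \gamma_{\rm res}:=\min\{\omega_-,\ \omega_+-\omega_-\}>0.$$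
   Context: For $\boldsymbol\alpha=(\alpha_1,\alpha_2),\boldsymbol\beta=(\beta_1,\beta_2)\in\mathbb N^2$ (with $\mathbb N$ including $0$), $|\boldsymbol\alpha+\boldsymbol\beta|:=\alpha_1+\alpha_2+\beta_1+\beta_2$, and $\boldsymbol\omega\cdot(\boldsymbol\alpha-\boldsymbol\beta)=\omega_-(\alpha_1-\beta_1)+\omega_+(\alpha_2-\beta_2)$. *)

theory Defs
  imports Main Complex_Main
begin

definition len2 :: "nat \<times> nat \<Rightarrow> nat \<times> nat \<Rightarrow> nat" where
  "len2 a b = fst a + snd a + fst b + snd b"

definition omega_dot :: "real \<Rightarrow> real \<Rightarrow> nat \<times> nat \<Rightarrow> nat \<times> nat \<Rightarrow> real" where
  "omega_dot wm wp a b =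
     wm * (real (fst a) - real (fst b)) + wp * (real (snd a) - real (snd b))"

end

theory Submission
  imports Defs
begin

text \<open>Put \<open>d = \<alpha> - \<beta>\<close>. From \<open>|\<alpha> + \<beta>| = 4\<close> we get \<open>|d\<^sub>1| + |d\<^sub>2| \<le> 4\<close> with \<open>d\<^sub>1 + d\<^sub>2\<close> even.
  If \<open>d\<^sub>2 = 0\<close> then \<open>\<omega> \<cdot> d = d\<^sub>1 \<omega>\<^sub>-\<close> with \<open>d\<^sub>1 \<noteq> 0\<close>. Otherwise, up to the sign of \<open>d\<close>,
  \<open>d\<^sub>2 > 0\<close>, and then \<open>d\<^sub>1 + d\<^sub>2 \<ge> 0\<close> except for the resonant difference \<open>d = (-3, 1)\<close>,
  so that \<open>\<omega> \<cdot> d = \<omega>\<^sub>- (d\<^sub>1 + d\<^sub>2) + (\<omega>\<^sub>+ - \<omega>\<^sub>-) d\<^sub>2 \<ge> \<omega>\<^sub>+ - \<omega>\<^sub>-\<close>.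
  The resonant differences \<open>\<plusminus>(3, -1)\<close> contribute exactly \<open>|3 \<omega>\<^sub>- - \<omega>\<^sub>+|\<close>.\<close>

lemma sum_nonneg_if_nonresonant:
  fixes d1 d2 :: int
  assumes "0 < d2" "\<bar>d1\<bar> + \<bar>d2\<bar> \<le> 4" "even (d1 + d2)" "(d1, d2) \<noteq> (-3, 1)"
  shows "0 \<le> d1 + d2"
proof (rule ccontr)
  assume "\<not> 0 \<le> d1 + d2"
  then have "d2 = 1" "d1 = -2 \<or> d1 = -3" using assms(1,2) by linarith+
  then show False using assms(3,4) by auto
qed

lemma abs_small_combination_ge:
  fixes d1 d2 :: int and wm wp :: real
  assumes "0 < wm" "wm < wp"
    and "\<bar>d1\<bar> + \<bar>d2\<bar> \<le> 4" "even (d1 + d2)" "(d1, d2) \<noteq> (0, 0)"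
    and "(d1, d2) \<notin> {(3, -1), (-3, 1)}"
  shows "min wm (wp - wm) \<le> \<bar>wm * d1 + wp * d2\<bar>"
proof -
  have second_coord_pos: "min wm (wp - wm) \<le> wm * e1 + wp * e2"
    if "0 < e2" "\<bar>e1\<bar> + \<bar>e2\<bar> \<le> 4" "even (e1 + e2)" "(e1, e2) \<noteq> (-3, 1)" for e1 e2 :: int
  proof -
    have "0 \<le> e1 + e2" using sum_nonneg_if_nonresonant[OF that] .
    then have "0 \<le> wm * (e1 + e2)" using assms(1) by simp
    moreover have "wp - wm \<le> (wp - wm) * e2" using \<open>0 < e2\<close> assms(2) by simp
    ultimately have "wp - wm \<le> wm * (e1 + e2) + (wp - wm) * e2" by linarith
    also have "\<dots> = wm * e1 + wp * e2" by (simp add: algebra_simps)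
    finally show ?thesis by linarith
  qed
  consider "d2 = 0" | "0 < d2" | "d2 < 0" by linarith
  then show ?thesis
  proof cases
    case 1
    then have "1 \<le> \<bar>d1\<bar>" using assms(5) by simp
    then have "wm \<le> \<bar>wm * d1\<bar>" using assms(1) by (simp add: abs_mult)
    then show ?thesis using 1 by simp
  next
    case 2
    then show ?thesis using second_coord_pos[of d2 d1] assms by auto
  next
    case 3
    then have "min wm (wp - wm) \<le> wm * (- d1) + wp * (- d2)"
      using second_coord_pos[of "- d2" "- d1"] assms by auto
    then show ?thesis by linarith
  qed
qed

lemma abs_omega_dot_ge_min:
  assumes "0 < wm" "wm < wp" "len2 a b = 4" "a \<noteq> b"
    and "(a, b) \<notin> {((3, 0), (0, 1)), ((0, 1), (3, 0))}"
  shows "min wm (wp - wm) \<le> \<bar>omega_dot wm wp a b\<bar>"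
proof -
  obtain a1 a2 b1 b2 where ab: "a = (a1, a2)" "b = (b1, b2)" by fastforce
  define d1 where "d1 = int a1 - int b1"
  define d2 where "d2 = int a2 - int b2"
  have sum: "a1 + a2 + b1 + b2 = 4" using assms(3) ab by (simp add: len2_def)
  have "omega_dot wm wp a b = wm * d1 + wp * d2"
    by (simp add: omega_dot_def ab d1_def d2_def)
  moreover have "\<bar>d1\<bar> + \<bar>d2\<bar> \<le> 4" using sum unfolding d1_def d2_def by linarith
  moreover have "int a1 + int a2 + int b1 + int b2 = 4" using sum by linarith
  then have "d1 + d2 = 4 - 2 * (int b1 + int b2)" unfolding d1_def d2_def by (simp add: algebra_simps)
  then have "even (d1 + d2)" by simp
  moreover have "(d1, d2) \<noteq> (0, 0)" using assms(4) ab unfolding d1_def d2_def by auto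
  moreover have "(d1, d2) \<notin> {(3, -1), (-3, 1)}"
    using sum assms(5) ab unfolding d1_def d2_def by auto
  ultimately show ?thesis using abs_small_combination_ge assms(1,2) by metis
qed

lemma abs_omega_dot_resonant:
  "\<bar>omega_dot wm wp (3, 0) (0, 1)\<bar> = \<bar>3 * wm - wp\<bar>"
  "\<bar>omega_dot wm wp (0, 1) (3, 0)\<bar> = \<bar>3 * wm - wp\<bar>"
  by (simp_all add: omega_dot_def)

theorem proposition4p1:
  fixes wm wp :: real
  assumes "0 < wm" and "wm < wp"
  shows "(wp \<noteq> 3 * wm \<longrightarrow>
            (Min {wm, wp - wm, \<bar>3 * wm - wp\<bar>} > 0 \<and>
             (\<forall>a b :: nat \<times> nat. len2 a b = 4 \<and> a \<noteq> b \<longrightarrow>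
                \<bar>omega_dot wm wp a b\<bar> \<ge> Min {wm, wp - wm, \<bar>3 * wm - wp\<bar>})))
       \<and> (wp = 3 * wm \<longrightarrow>
            (min wm (wp - wm) > 0 \<and>
             (\<forall>a b :: nat \<times> nat. len2 a b = 4 \<and> a \<noteq> b \<and>
                (a, b) \<notin> {((3,0),(0,1)), ((0,1),(3,0))} \<longrightarrow>
                \<bar>omega_dot wm wp a b\<bar> \<ge> min wm (wp - wm))))"
proof -
  have Min_eq: "Min {wm, wp - wm, \<bar>3 * wm - wp\<bar>} = min (min wm (wp - wm)) \<bar>3 * wm - wp\<bar>"
    by (simp add: min.assoc)
  have "Min {wm, wp - wm, \<bar>3 * wm - wp\<bar>} \<le> \<bar>omega_dot wm wp a b\<bar>"
    if "len2 a b = 4" "a \<noteq> b" for a b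
  proof (cases "(a, b) \<in> {((3, 0), (0, 1)), ((0, 1), (3, 0))}")
    case True
    then show ?thesis unfolding Min_eq using abs_omega_dot_resonant by auto
  next
    case False
    then show ?thesis unfolding Min_eq using abs_omega_dot_ge_min[OF assms that] by linarith
  qed
  moreover have "wp \<noteq> 3 * wm \<Longrightarrow> 0 < Min {wm, wp - wm, \<bar>3 * wm - wp\<bar>}"
    unfolding Min_eq using assms by simp
  moreover have "0 < min wm (wp - wm)" using assms by simp
  ultimately show ?thesis using abs_omega_dot_ge_min[OF assms] by blast
qed

end
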